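(* Let $N=2^L$ ($L\ge1$), channel numbers $r_0,\dots,r_{L-1}\ge1$, an output index $y$, and pairwise distinct covering templates $\mathbf x^{(1)},\dots,\mathbf x^{(M)}\in\mathbb R^s$ be given. Suppose all parameters of the deep ConvNet with ReLU activation, max pooling and weight sharing (representation parameters $\theta_1,\dots,\theta_M\in\Theta$ and the shared linear weights) are drawn from a distribution with a continuous, nowhere-vanishing probability density function. Then with positive probability the resulting score function $h^D_y$ can be realized by a shallow ConvNet with ReLU activation and max pooling (not limited by weight sharing) having a single hidden channel ($Z=1$), i.e. there exist $f_{\tilde\theta_1},\dots,f_{\tilde\theta_M}\in\mathcal F$ and weights for this shallow ConvNet with $\mathcal A(h^S_y)=\mathcal A(h^D_y)$.
   Context: Inputs are $X=(\mathbf x_1,\dots,\mathbf x_N)\in(\mathbb R^s)^N$. Representation functions come from a family $\mathcal F=\{f_\theta:\mathbb R^s\to\mathbb R:\theta\in\Theta\}$, $\Theta$ an open subset of a Euclidean space, assumed throughout to satisfy: (continuity) $f_\theta(\mathbf x)$ continuous in $\theta$ and $\mathbf x$; (non-degeneracy) for any pairwise distinct $\mathbf x^{(1)},\dots,\mathbf x^{(M)}$ there exist $f_{\theta_1},\dots,f_{\theta_M}\in\mathcal F$ with $(f_{\theta_d}(\mathbf x^{(i)}))_{i,d}$ non-singular. ReLU activation with max pooling: $\sigma(z)=\max\{0,z\}$, $P=\max$. Shallow ConvNet ($Z$ hidden channels, unshared): $h^S_y(X)=\sum_{z=1}^Z a^y_z\,P_{i\in[N]}\big(\sigma(\sum_{d=1}^M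 a^{z,i}_d f_{\theta_d}(\mathbf x_i))\big)$, $\mathbf a^{z,i}\in\mathbb R^M$, $\mathbf a^y\in\mathbb R^Z$. Deep ConvNet with weight sharing: with $f_{\theta_d}\in\mathcal F$ and weights $\mathbf a^{0,\gamma}\in\mathbb R^M$ ($\gamma\in[r_0]$), $\mathbf a^{l,\gamma}\in\mathbb R^{r_{l-1}}$ ($l\in[L-1]$, $\gamma\in[r_l]$), $\mathbf a^{L,y}\in\mathbb R^{r_{L-1}}$: $u^0_{j,\gamma}=\sigma(\sum_d a^{0,\gamma}_d f_{\theta_d}(\mathbf x_j))$; for $l=0,\dots,L-1$, $v^l_{j,\gamma}=P(u^l_{2j-1,\gamma},u^l_{2j,\gamma})$ ($j\in[N/2^{l+1}]$), for $l\ge1$, $u^l_{j,\gamma}=\sigma(\sum_\alpha a^{l,\gamma}_\alpha v^{l-1}_{j,\alpha})$ ($j\in[N/2^l]$); $h^D_y(X)=\sum_\alpha a^{L,y}_\alpha v^{L-1}_{1,\alpha}$. Grid tensor: $\mathcal A(h)_{d_1,\dots,d_N}=h(\mathbf x^{(d_1)},\dots,\mathbf x^{(d_N)})$. Templates are covering if score functions are identified whenever their grid tensors coincide. *)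

theory Defs
  imports "HOL-Probability.Probability"
begin

definition relu :: "real \<Rightarrow> real" where
  "relu z = max 0 z"

definition nonsingular_mat :: "nat \<Rightarrow> (nat \<Rightarrow> nat \<Rightarrow> real) \<Rightarrow> bool" where
  "nonsingular_mat m A \<longleftrightarrow> (\<exists>B.
      (\<forall>i<m. \<forall>k<m. (\<Sum>j<m. A i j * B j k) = (if i = k then 1 else 0)) \<and>
      (\<forall>i<m. \<forall>k<m. (\<Sum>j<m. B i j * A j k) = (if i = k then 1 else 0)))"

definition rep_family :: "'p::euclidean_space set \<Rightarrow> ('p \<Rightarrow> 'x::topological_space \<Rightarrow> real) \<Rightarrow> bool" where
  "rep_family \<Theta> f \<longleftrightarrow> open \<Theta> \<and>
     continuous_on (\<Theta> \<times> UNIV) (\<lambda>(\<theta>, x). f \<theta> x) \<and>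
     (\<forall>m (xs :: nat \<Rightarrow> 'x). inj_on xs {..<m} \<longrightarrow>
        (\<exists>th. (\<forall>d<m. th d \<in> \<Theta>) \<and> nonsingular_mat m (\<lambda>i d. f (th d) (xs i))))"

text \<open>Representation parameters
  th d (d < M); shared weights w (l, gamma, alpha):
  layer 0: w (0, gamma, d), gamma < r 0, d < M;
  layer l (1 <= l < L): w (l, gamma, alpha), gamma < r l, alpha < r (l-1);
  output y: w (L, 0, alpha), alpha < r (L-1).
  deep_u l j gamma is u^l_{j+1,gamma+1}; pooling pairs positions 2j, 2j+1.\<close>
fun deep_u :: "('p \<Rightarrow> 'x \<Rightarrow> real) \<Rightarrow> nat \<Rightarrow> (nat \<Rightarrow> nat) \<Rightarrow> (nat \<Rightarrow> 'p)
      \<Rightarrow> (nat \<times> nat \<times> nat \<Rightarrow> real) \<Rightarrow> (nat \<Rightarrow> 'x) \<Rightarrow> nat \<Rightarrow> nat \<Rightarrow> nat \<Rightarrow> real" where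
  "deep_u f M r th w X 0 j \<gamma> = relu (\<Sum>d<M. w (0, \<gamma>, d) * f (th d) (X j))"
| "deep_u f M r th w X (Suc l) j \<gamma> =
     relu (\<Sum>\<alpha><r l. w (Suc l, \<gamma>, \<alpha>) *
              max (deep_u f M r th w X l (2 * j) \<alpha>) (deep_u f M r th w X l (2 * j + 1) \<alpha>))"

definition deep_v :: "('p \<Rightarrow> 'x \<Rightarrow> real) \<Rightarrow> nat \<Rightarrow> (nat \<Rightarrow> nat) \<Rightarrow> (nat \<Rightarrow> 'p)
      \<Rightarrow> (nat \<times> nat \<times> nat \<Rightarrow> real) \<Rightarrow> (nat \<Rightarrow> 'x) \<Rightarrow> nat \<Rightarrow> nat \<Rightarrow> nat \<Rightarrow> real" where
  "deep_v f M r th w X l j \<gamma> =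
     max (deep_u f M r th w X l (2 * j) \<gamma>) (deep_u f M r th w X l (2 * j + 1) \<gamma>)"

definition deep_score :: "('p \<Rightarrow> 'x \<Rightarrow> real) \<Rightarrow> nat \<Rightarrow> nat \<Rightarrow> (nat \<Rightarrow> nat) \<Rightarrow> (nat \<Rightarrow> 'p)
      \<Rightarrow> (nat \<times> nat \<times> nat \<Rightarrow> real) \<Rightarrow> (nat \<Rightarrow> 'x) \<Rightarrow> real" where
  "deep_score f M L r th w X = (\<Sum>\<alpha><r (L - 1). w (L, 0, \<alpha>) * deep_v f M r th w X (L - 1) 0 \<alpha>)"

definition deep_widx :: "nat \<Rightarrow> nat \<Rightarrow> (nat \<Rightarrow> nat) \<Rightarrow> (nat \<times> nat \<times> nat) set" where
  "deep_widx M L r =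
     {(0, \<gamma>, d) | \<gamma> d. \<gamma> < r 0 \<and> d < M}
     \<union> {(l, \<gamma>, \<alpha>) | l \<gamma> \<alpha>. 1 \<le> l \<and> l < L \<and> \<gamma> < r l \<and> \<alpha> < r (l - 1)}
     \<union> {(L, 0, \<alpha>) | \<alpha>. \<alpha> < r (L - 1)}"

text \<open>Shallow ConvNet (no weight sharing) with Z hidden channels:
  a z i d = a^{z,i}_d, ay z = a^y_z.\<close>
definition shallow_score :: "('p \<Rightarrow> 'x \<Rightarrow> real) \<Rightarrow> nat \<Rightarrow> nat \<Rightarrow> nat \<Rightarrow> (nat \<Rightarrow> 'p)
      \<Rightarrow> (nat \<Rightarrow> nat \<Rightarrow> nat \<Rightarrow> real) \<Rightarrow> (nat \<Rightarrow> real) \<Rightarrow> (nat \<Rightarrow> 'x) \<Rightarrow> real" where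
  "shallow_score f M N Z th a ay X =
     (\<Sum>z<Z. ay z * Max ((\<lambda>i. relu (\<Sum>d<M. a z i d * f (th d) (X i))) ` {..<N}))"

definition grid_tensor :: "nat \<Rightarrow> nat \<Rightarrow> (nat \<Rightarrow> 'x) \<Rightarrow> ((nat \<Rightarrow> 'x) \<Rightarrow> real) \<Rightarrow> (nat \<Rightarrow> nat) \<Rightarrow> real" where
  "grid_tensor M N xs h = restrict (\<lambda>dd. h (\<lambda>i. xs (dd i))) {dd. \<forall>i<N. dd i < M}"

definition deep_param_measure :: "nat \<Rightarrow> nat \<Rightarrow> (nat \<Rightarrow> nat)
      \<Rightarrow> ((nat \<Rightarrow> 'p::euclidean_space) \<times> (nat \<times> nat \<times> nat \<Rightarrow> real)) measure" where
  "deep_param_measure M L r =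
     (PiM {..<M} (\<lambda>_. lborel)) \<Otimes>\<^sub>M (PiM (deep_widx M L r) (\<lambda>_. lborel))"

definition deep_param_domain :: "'p set \<Rightarrow> nat \<Rightarrow> nat \<Rightarrow> (nat \<Rightarrow> nat)
      \<Rightarrow> ((nat \<Rightarrow> 'p) \<times> (nat \<times> nat \<times> nat \<Rightarrow> real)) set" where
  "deep_param_domain \<Theta> M L r =
     (PiE {..<M} (\<lambda>_. \<Theta>)) \<times> (PiE (deep_widx M L r) (\<lambda>_. UNIV))"

end

theory Submission
  imports Defs
begin

text \<open>With ReLU activation and max pooling, if every first-layer unit has a non-positive
  pre-activation at every template, then every later unit is the ReLU of a combination of zeros,
  so the deep score function vanishes on the whole grid and is realized by the shallow network
  with output weight 0. Non-degeneracy of the family provides parameters \<open>\<theta>\<^sup>0\<close> whose value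
  matrix at the templates is invertible, hence first-layer weights \<open>c\<close> making all these
  pre-activations equal to \<open>-1\<close>. By continuity they stay negative on a product of balls around
  \<open>(\<theta>\<^sup>0, c)\<close>, which has positive Lebesgue measure and hence positive probability, the density
  being positive on the parameter domain.\<close>

lemma nonsingular_mat_solvable:
  assumes "nonsingular_mat m A"
  shows "\<exists>c. \<forall>i<m. (\<Sum>d<m. A i d * c d) = b i"
proof -
  obtain B where B: "\<forall>i<m. \<forall>k<m. (\<Sum>j<m. A i j * B j k) = (if i = k then 1 else 0)"
    using assms unfolding nonsingular_mat_def by blast
  have "(\<Sum>d<m. A i d * (\<Sum>k<m. B d k * b k)) = b i" if i: "i < m" for i
  proof -
    have "(\<Sum>d<m. A i d * (\<Sum>k<m. B d k * b k)) = (\<Sum>d<m. \<Sum>k<m. A i d * B d k * b k)"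
      by (simp only: sum_distrib_left mult.assoc)
    also have "\<dots> = (\<Sum>k<m. \<Sum>d<m. A i d * B d k * b k)"
      by (rule sum.swap)
    also have "\<dots> = (\<Sum>k<m. (\<Sum>d<m. A i d * B d k) * b k)"
      by (simp only: sum_distrib_right)
    also have "\<dots> = (\<Sum>k<m. if i = k then b k else 0)"
      using B i by (intro sum.cong) auto
    finally show ?thesis
      using i by simp
  qed
  then show ?thesis
    by (intro exI[of _ "\<lambda>d. \<Sum>k<m. B d k * b k"]) blast
qed

lemma rep_family_isCont:
  assumes "rep_family \<Theta> f" "\<theta> \<in> \<Theta>"
  shows "isCont (\<lambda>\<theta>. f \<theta> x) \<theta>"
proof -
  have "open \<Theta>" and "continuous_on (\<Theta> \<times> UNIV) (\<lambda>(\<theta>, x). f \<theta> x)"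
    using assms(1) unfolding rep_family_def by auto
  moreover have "continuous_on \<Theta> (\<lambda>\<theta>. (\<theta>, x))"
    by (intro continuous_intros)
  ultimately have "continuous_on \<Theta> (\<lambda>\<theta>. f \<theta> x)"
    using continuous_on_compose2[of "\<Theta> \<times> UNIV" "\<lambda>(\<theta>, x). f \<theta> x"] by fastforce
  then show ?thesis
    using \<open>open \<Theta>\<close> assms(2) continuous_on_eq_continuous_at by blast
qed

lemma eventually_nhds_Pair_ball:
  fixes a :: "'a::metric_space" and b :: "'b::metric_space"
  assumes "eventually P (nhds (a, b))"
  obtains \<rho> \<delta> where "\<rho> > 0" "\<delta> > 0" "\<And>x y. dist x a < \<rho> \<Longrightarrow> dist y b < \<delta> \<Longrightarrow> P (x, y)"
proof -
  obtain Pa Pb where "eventually Pa (nhds a)" "eventually Pb (nhds b)"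
    and P: "\<And>x y. Pa x \<Longrightarrow> Pb y \<Longrightarrow> P (x, y)"
    using assms unfolding nhds_prod eventually_prod_filter by blast
  then obtain \<rho> \<delta> where "\<rho> > 0" "\<And>x. dist x a < \<rho> \<Longrightarrow> Pa x" "\<delta> > 0" "\<And>y. dist y b < \<delta> \<Longrightarrow> Pb y"
    unfolding eventually_nhds_metric by (auto simp: dist_commute)
  then show ?thesis
    using P that by blast
qed

lemma rep_family_mult_less_near:
  assumes fam: "rep_family \<Theta> f" and "\<theta>\<^sub>0 \<in> \<Theta>" "finite X" "0 < e"
  shows "\<exists>\<rho>>0. \<exists>\<delta>>0. \<forall>a \<theta>. \<bar>a - c\<bar> < \<rho> \<longrightarrow> dist \<theta> \<theta>\<^sub>0 < \<delta> \<longrightarrow>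
           \<theta> \<in> \<Theta> \<and> (\<forall>x\<in>X. a * f \<theta> x < c * f \<theta>\<^sub>0 x + e)"
proof -
  have "open \<Theta>"
    using fam unfolding rep_family_def by blast
  then have in_\<Theta>: "eventually (\<lambda>q. q \<in> UNIV \<times> \<Theta>) (nhds (c, \<theta>\<^sub>0))"
    using \<open>\<theta>\<^sub>0 \<in> \<Theta>\<close> by (intro eventually_nhds_in_open open_Times) simp_all
  have id: "((\<lambda>q. q) \<longlongrightarrow> (c, \<theta>\<^sub>0)) (nhds (c, \<theta>\<^sub>0))"
    by (rule filterlim_ident)
  have fst: "(fst \<longlongrightarrow> c) (nhds (c, \<theta>\<^sub>0))" and snd: "(snd \<longlongrightarrow> \<theta>\<^sub>0) (nhds (c, \<theta>\<^sub>0))"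
    using tendsto_fst[OF id] tendsto_snd[OF id] by simp_all
  have lim: "((\<lambda>q. fst q * f (snd q) x) \<longlongrightarrow> c * f \<theta>\<^sub>0 x) (nhds (c, \<theta>\<^sub>0))" for x
    by (rule tendsto_mult[OF fst isCont_tendsto_compose[OF rep_family_isCont[OF fam \<open>\<theta>\<^sub>0 \<in> \<Theta>\<close>] snd]])
  have "eventually (\<lambda>q. fst q * f (snd q) x < c * f \<theta>\<^sub>0 x + e) (nhds (c, \<theta>\<^sub>0))" for x
    using \<open>0 < e\<close> by (intro order_tendstoD(2)[OF lim]) simp
  then have "eventually (\<lambda>q. \<forall>x\<in>X. fst q * f (snd q) x < c * f \<theta>\<^sub>0 x + e) (nhds (c, \<theta>\<^sub>0))"
    using \<open>finite X\<close> by (simp add: eventually_ball_finite)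
  with in_\<Theta> have "eventually (\<lambda>(a, \<theta>). \<theta> \<in> \<Theta> \<and> (\<forall>x\<in>X. a * f \<theta> x < c * f \<theta>\<^sub>0 x + e))
      (nhds (c, \<theta>\<^sub>0))"
    by (rule eventually_elim2) auto
  then show ?thesis
    unfolding dist_real_def[symmetric] by (rule eventually_nhds_Pair_ball) blast
qed

lemma emeasure_PiM_PiE_ball_pos:
  fixes z :: "'i \<Rightarrow> 'a::euclidean_space"
  assumes "finite I" "\<forall>i\<in>I. 0 < \<rho> i"
  shows "0 < emeasure (PiM I (\<lambda>_. lborel)) (PiE I (\<lambda>i. ball (z i) (\<rho> i)))"
proof -
  interpret product_sigma_finite "\<lambda>_::'i. lborel :: 'a measure"
    by standard
  have "emeasure (PiM I (\<lambda>_. lborel)) (PiE I (\<lambda>i. ball (z i) (\<rho> i)))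
      = (\<Prod>i\<in>I. emeasure lborel (ball (z i) (\<rho> i)))"
    using assms by (intro emeasure_PiM) auto
  also have "\<dots> > 0"
    using assms by (simp add: emeasure_ball prod_ennreal prod_pos less_imp_le)
  finally show ?thesis .
qed

lemma emeasure_pair_PiE_ball_pos:
  fixes z :: "'i \<Rightarrow> 'a::euclidean_space" and z' :: "'j \<Rightarrow> 'b::euclidean_space"
  assumes "finite I" "finite J" "\<forall>i\<in>I. 0 < \<rho> i" "\<forall>j\<in>J. 0 < \<rho>' j"
  shows "0 < emeasure (PiM I (\<lambda>_. lborel) \<Otimes>\<^sub>M PiM J (\<lambda>_. lborel))
               (PiE I (\<lambda>i. ball (z i) (\<rho> i)) \<times> PiE J (\<lambda>j. ball (z' j) (\<rho>' j)))"
proof -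
  interpret product_sigma_finite "\<lambda>_::'j. lborel :: 'b measure"
    by standard
  have "emeasure (PiM I (\<lambda>_. lborel) \<Otimes>\<^sub>M PiM J (\<lambda>_. lborel))
          (PiE I (\<lambda>i. ball (z i) (\<rho> i)) \<times> PiE J (\<lambda>j. ball (z' j) (\<rho>' j)))
      = emeasure (PiM I (\<lambda>_. lborel)) (PiE I (\<lambda>i. ball (z i) (\<rho> i)))
        * emeasure (PiM J (\<lambda>_. lborel)) (PiE J (\<lambda>j. ball (z' j) (\<rho>' j)))"
    using assms by (intro sigma_finite_measure.emeasure_pair_measure_Times sigma_finite sets_PiM_I_finite) auto
  then show ?thesis
    using assms by (simp add: ennreal_zero_less_mult_iff emeasure_PiM_PiE_ball_pos)
qed

lemma emeasure_density_pos:
  assumes "E \<in> sets Q" "0 < emeasure Q E" "g \<in> borel_measurable Q" "\<forall>x\<in>E. 0 < g x"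
  shows "0 < emeasure (density Q (\<lambda>x. ennreal (g x))) E"
proof (rule ccontr)
  assume "\<not> ?thesis"
  then have "(\<integral>\<^sup>+ x. ennreal (g x) * indicator E x \<partial>Q) = 0"
    using assms(1,3) by (simp add: emeasure_density)
  then have "AE x in Q. ennreal (g x) * indicator E x = 0"
    using assms(1,3) by (subst nn_integral_0_iff_AE[symmetric]) auto
  then have "AE x in Q. x \<notin> E"
    by eventually_elim (use assms(4) in \<open>auto simp: indicator_def split: if_splits\<close>)
  then have "emeasure Q E = 0"
    using assms(1) by (subst AE_iff_measurable[symmetric, where P="\<lambda>x. x \<notin> E"])
      (auto dest: sets.sets_into_space)
  with assms(2) show False
    by simp
qed

lemma finite_deep_widx: "finite (deep_widx M L r)"
proof -
  define B where "B = (\<Sum>l\<le>L. r l) + M + 1"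
  have B: "r l < B" if "l \<le> L" for l
    unfolding B_def using that member_le_sum[of l "{..L}" r] by auto
  have "deep_widx M L r \<subseteq> {..L} \<times> {..<B} \<times> {..<B}"
  proof
    fix x assume "x \<in> deep_widx M L r"
    then show "x \<in> {..L} \<times> {..<B} \<times> {..<B}"
      unfolding deep_widx_def
    proof (elim UnE CollectE exE conjE)
      fix l \<gamma> \<alpha> assume "x = (l, \<gamma>, \<alpha>)" "1 \<le> l" "l < L" "\<gamma> < r l" "\<alpha> < r (l - 1)"
      moreover have "r (l - 1) < B"
        using B \<open>l < L\<close> by simp
      ultimately show ?thesis
        using B[of l] by auto
    qed (use B[of 0] B[of "L - 1"] in \<open>auto simp: B_def\<close>)
  qed
  then show ?thesis
    by (rule finite_subset) auto
qed

text \<open>Node \<open>j\<close> of level \<open>l\<close> pools the input positions \<open>j * 2\<^sup>l, \<dots>, (j + 1) * 2\<^sup>l - 1\<close>.\<close>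

lemma deep_u_eq_0:
  assumes first_layer: "\<forall>j<2^L. \<forall>\<gamma><r 0. (\<Sum>d<M. w (0, \<gamma>, d) * f (th d) (X j)) \<le> 0"
  shows "(j + 1) * 2^l \<le> (2::nat)^L \<Longrightarrow> (l = 0 \<longrightarrow> \<gamma> < r 0) \<Longrightarrow> deep_u f M r th w X l j \<gamma> = 0"
proof (induction l arbitrary: j \<gamma>)
  case 0
  then show ?case
    using first_layer by (simp add: relu_def)
next
  case (Suc l)
  have right: "(2 * j + 1 + 1) * 2^l \<le> (2::nat)^L"
    using Suc.prems(1) by (simp add: algebra_simps)
  then have left: "(2 * j + 1) * 2^l \<le> (2::nat)^L"
    by (meson le_add1 mult_le_mono1 order_trans)
  have "deep_u f M r th w X l (2 * j) \<alpha> = 0" if "\<alpha> < r l" for \<alpha>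
    by (rule Suc.IH[OF left]) (use that in auto)
  moreover have "deep_u f M r th w X l (2 * j + 1) \<alpha> = 0" if "\<alpha> < r l" for \<alpha>
    by (rule Suc.IH[OF right]) (use that in auto)
  ultimately show ?case
    by (simp add: relu_def)
qed

lemma deep_score_eq_0:
  assumes "1 \<le> L"
    and "\<forall>j<2^L. \<forall>\<gamma><r 0. (\<Sum>d<M. w (0, \<gamma>, d) * f (th d) (X j)) \<le> 0"
  shows "deep_score f M L r th w X = 0"
proof -
  have "2 * 2^(L - 1) = (2::nat)^L"
    using \<open>1 \<le> L\<close> by (metis power_Suc Suc_diff_le diff_Suc_1)
  then have block: "(j + 1) * 2^(L - 1) \<le> (2::nat)^L" if "j \<le> 1" for j
    using that by (metis mult_le_mono1 one_add_one add_le_mono1)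
  have "deep_u f M r th w X (L - 1) j \<alpha> = 0" if "j \<le> 1" "\<alpha> < r (L - 1)" for j \<alpha>
  proof -
    have "L - 1 = 0 \<longrightarrow> \<alpha> < r 0"
      using that(2) by auto
    then show ?thesis
      by (rule deep_u_eq_0[where L = L and r = r and M = M and w = w and f = f and th = th and X = X,
            OF assms(2) block[OF that(1)]])
  qed
  then show ?thesis
    by (simp add: deep_score_def deep_v_def)
qed

definition first_layer_inactive ::
    "('p \<Rightarrow> 'x \<Rightarrow> real) \<Rightarrow> nat \<Rightarrow> (nat \<Rightarrow> nat) \<Rightarrow> (nat \<Rightarrow> 'x) \<Rightarrow> (nat \<Rightarrow> 'p)
      \<Rightarrow> (nat \<times> nat \<times> nat \<Rightarrow> real) \<Rightarrow> bool" where
  "first_layer_inactive f M r xs th w \<longleftrightarrow>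
     (\<forall>j<M. \<forall>\<gamma><r 0. (\<Sum>d<M. w (0, \<gamma>, d) * f (th d) (xs j)) \<le> 0)"

lemma grid_tensor_deep_score_eq_shallow_zero:
  assumes "1 \<le> L" "first_layer_inactive f M r xs th w"
  shows "grid_tensor M (2^L) xs (shallow_score f M (2^L) 1 th' a (\<lambda>_. 0))
       = grid_tensor M (2^L) xs (deep_score f M L r th w)"
  unfolding grid_tensor_def
proof (rule restrict_ext)
  fix dd :: "nat \<Rightarrow> nat"
  assume "dd \<in> {dd. \<forall>i<2^L. dd i < M}"
  then have "deep_score f M L r th w (\<lambda>i. xs (dd i)) = 0"
    using assms unfolding first_layer_inactive_def by (intro deep_score_eq_0) auto
  then show "shallow_score f M (2^L) 1 th' a (\<lambda>_. 0) (\<lambda>i. xs (dd i)) = deep_score f M L r th w (\<lambda>i. xs (dd i))"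
    by (simp add: shallow_score_def)
qed

lemma first_layer_inactive_near:
  fixes M :: nat and c :: "nat \<Rightarrow> real"
  assumes fam: "rep_family \<Theta> f" and th0: "\<forall>d<M. th0 d \<in> \<Theta>"
    and c: "\<forall>j<M. (\<Sum>d<M. c d * f (th0 d) (xs j)) \<le> -1"
  obtains \<delta> \<rho> where "\<forall>d<M. 0 < \<delta> d \<and> 0 < \<rho> d"
    and "\<forall>th w. (\<forall>d<M. dist (th d) (th0 d) < \<delta> d) \<and> (\<forall>\<gamma><r 0. \<forall>d<M. \<bar>w (0, \<gamma>, d) - c d\<bar> < \<rho> d) \<longrightarrow>
           (\<forall>d<M. th d \<in> \<Theta>) \<and> first_layer_inactive f M r xs th w"
proof -
  have "\<forall>d<M. \<exists>\<rho>>0. \<exists>\<delta>>0. \<forall>a \<theta>. \<bar>a - c d\<bar> < \<rho> \<longrightarrow> dist \<theta> (th0 d) < \<delta> \<longrightarrow>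
          \<theta> \<in> \<Theta> \<and> (\<forall>x\<in>xs ` {..<M}. a * f \<theta> x < c d * f (th0 d) x + 1 / M)"
    using th0 by (intro allI impI rep_family_mult_less_near[OF fam]) auto
  then obtain \<rho> \<delta> where \<rho>\<delta>: "\<forall>d<M. 0 < \<rho> d \<and> 0 < \<delta> d \<and> (\<forall>a \<theta>. \<bar>a - c d\<bar> < \<rho> d \<longrightarrow>
      dist \<theta> (th0 d) < \<delta> d \<longrightarrow> \<theta> \<in> \<Theta> \<and> (\<forall>x\<in>xs ` {..<M}. a * f \<theta> x < c d * f (th0 d) x + 1 / M))"
    by metis
  show ?thesis
  proof (rule that)
    show "\<forall>d<M. 0 < \<delta> d \<and> 0 < \<rho> d"
      using \<rho>\<delta> by blast
    show "\<forall>th w. (\<forall>d<M. dist (th d) (th0 d) < \<delta> d) \<and> (\<forall>\<gamma><r 0. \<forall>d<M. \<bar>w (0, \<gamma>, d) - c d\<bar> < \<rho> d) \<longrightarrow>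
           (\<forall>d<M. th d \<in> \<Theta>) \<and> first_layer_inactive f M r xs th w"
    proof (intro allI impI, elim conjE)
      fix th and w :: "nat \<times> nat \<times> nat \<Rightarrow> real"
      assume th: "\<forall>d<M. dist (th d) (th0 d) < \<delta> d"
        and w: "\<forall>\<gamma><r 0. \<forall>d<M. \<bar>w (0, \<gamma>, d) - c d\<bar> < \<rho> d"
      have "th d \<in> \<Theta>" if "d < M" for d
      proof -
        have "\<bar>c d - c d\<bar> < \<rho> d"
          using \<rho>\<delta> that by simp
        then show ?thesis
          using \<rho>\<delta> th that by blast
      qed
      moreover have "(\<Sum>d<M. w (0, \<gamma>, d) * f (th d) (xs j)) < 0" if "\<gamma> < r 0" "j < M" for \<gamma> j
      proof -
        have "(\<Sum>d<M. w (0, \<gamma>, d) * f (th d) (xs j)) < (\<Sum>d<M. c d * f (th0 d) (xs j) + 1 / M)"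
          using \<rho>\<delta> th w that by (intro sum_strict_mono) auto
        also have "\<dots> = (\<Sum>d<M. c d * f (th0 d) (xs j)) + 1"
          using \<open>j < M\<close> by (simp add: sum.distrib)
        also have "\<dots> \<le> 0"
          using c \<open>j < M\<close> by auto
        finally show ?thesis .
      qed
      ultimately show "(\<forall>d<M. th d \<in> \<Theta>) \<and> first_layer_inactive f M r xs th w"
        unfolding first_layer_inactive_def by (auto intro: less_imp_le)
    qed
  qed
qed

lemma first_layer_inactive_positive_measure:
  fixes \<Theta> :: "'p::euclidean_space set" and f :: "'p \<Rightarrow> 'x::topological_space \<Rightarrow> real"
  assumes fam: "rep_family \<Theta> f" and distinct: "inj_on xs {..<M}"
  obtains E where "E \<in> sets (deep_param_measure M L r)" "0 < emeasure (deep_param_measure M L r) E"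
    and "E \<subseteq> {(th, w) \<in> deep_param_domain \<Theta> M L r. first_layer_inactive f M r xs th w}"
proof -
  obtain th0 where th0: "\<forall>d<M. th0 d \<in> \<Theta>" and ns: "nonsingular_mat M (\<lambda>j d. f (th0 d) (xs j))"
    using fam distinct unfolding rep_family_def by blast
  obtain c where "\<forall>j<M. (\<Sum>d<M. f (th0 d) (xs j) * c d) = -1"
    using nonsingular_mat_solvable[OF ns, of "\<lambda>_. -1"] by blast
  then have c: "\<forall>j<M. (\<Sum>d<M. c d * f (th0 d) (xs j)) \<le> -1"
    by (simp add: mult.commute)
  obtain \<delta> \<rho> where pos: "\<forall>d<M. 0 < \<delta> d \<and> 0 < \<rho> d"
    and near: "\<forall>th w. (\<forall>d<M. dist (th d) (th0 d) < \<delta> d) \<and> (\<forall>\<gamma><r 0. \<forall>d<M. \<bar>w (0, \<gamma>, d) - c d\<bar> < \<rho> d) \<longrightarrow>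
      (\<forall>d<M. th d \<in> \<Theta>) \<and> first_layer_inactive f M r xs th w"
    by (rule first_layer_inactive_near[OF fam th0 c])
  define w0 :: "nat \<times> nat \<times> nat \<Rightarrow> real" where "w0 = (\<lambda>(l, \<gamma>, d). if l = 0 then c d else 0)"
  define \<rho>w :: "nat \<times> nat \<times> nat \<Rightarrow> real" where "\<rho>w = (\<lambda>(l, \<gamma>, d). if l = 0 \<and> d < M then \<rho> d else 1)"
  define E where "E = PiE {..<M} (\<lambda>d. ball (th0 d) (\<delta> d)) \<times> PiE (deep_widx M L r) (\<lambda>i. ball (w0 i) (\<rho>w i))"
  have \<rho>w_pos: "0 < \<rho>w i" for i
    using pos unfolding \<rho>w_def by (simp split: prod.split)
  show ?thesis
  proof (rule that)
    show "E \<in> sets (deep_param_measure M L r)"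
      unfolding E_def deep_param_measure_def
      by (intro pair_measureI sets_PiM_I_finite finite_deep_widx) auto
    show "0 < emeasure (deep_param_measure M L r) E"
      unfolding E_def deep_param_measure_def
      using pos \<rho>w_pos by (intro emeasure_pair_PiE_ball_pos finite_deep_widx) simp_all
    show "E \<subseteq> {(th, w) \<in> deep_param_domain \<Theta> M L r. first_layer_inactive f M r xs th w}"
    proof clarify
      fix th w assume "(th, w) \<in> E"
      then have th: "th \<in> PiE {..<M} (\<lambda>d. ball (th0 d) (\<delta> d))"
        and w: "w \<in> PiE (deep_widx M L r) (\<lambda>i. ball (w0 i) (\<rho>w i))"
        unfolding E_def by auto
      have "\<forall>d<M. dist (th d) (th0 d) < \<delta> d"
        using th by (simp add: PiE_iff dist_commute)
      moreover have "\<bar>w (0, \<gamma>, d) - c d\<bar> < \<rho> d" if "\<gamma> < r 0" "d < M" for \<gamma> d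
      proof -
        have "(0, \<gamma>, d) \<in> deep_widx M L r"
          using that unfolding deep_widx_def by auto
        then have "w (0, \<gamma>, d) \<in> ball (w0 (0, \<gamma>, d)) (\<rho>w (0, \<gamma>, d))"
          by (rule PiE_mem[OF w])
        then show ?thesis
          using \<open>d < M\<close> by (simp add: w0_def \<rho>w_def dist_real_def abs_minus_commute)
      qed
      ultimately have "(\<forall>d<M. th d \<in> \<Theta>) \<and> first_layer_inactive f M r xs th w"
        using near by blast
      moreover have "w \<in> PiE (deep_widx M L r) (\<lambda>_. UNIV)"
        using w by (simp add: PiE_iff)
      ultimately show "(th, w) \<in> deep_param_domain \<Theta> M L r \<and> first_layer_inactive f M r xs th w"
        using th unfolding deep_param_domain_def by (simp add: PiE_iff)
    qed
  qed
qed

theorem claim16: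
  fixes \<Theta> :: "'p::euclidean_space set"
    and f :: "'p \<Rightarrow> real^'s \<Rightarrow> real"
    and L M :: nat
    and r :: "nat \<Rightarrow> nat"
    and xs :: "nat \<Rightarrow> real^'s"
    and g :: "(nat \<Rightarrow> 'p) \<times> (nat \<times> nat \<times> nat \<Rightarrow> real) \<Rightarrow> real"
    and P :: "((nat \<Rightarrow> 'p) \<times> (nat \<times> nat \<times> nat \<Rightarrow> real)) measure"
  assumes fam: "rep_family \<Theta> f"
    and L: "L \<ge> 1"
    and r: "\<forall>l<L. r l \<ge> 1"
    and distinct: "inj_on xs {..<M}"
    and P_def: "P = density (deep_param_measure M L r) (\<lambda>q. ennreal (g q))"
    and prob: "prob_space P"
    and g_meas: "g \<in> borel_measurable (deep_param_measure M L r)"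
    and g_nonneg: "\<forall>q. g q \<ge> 0"
    and g_cont: "continuous_on (deep_param_domain \<Theta> M L r) g"
    and g_pos: "\<forall>q\<in>deep_param_domain \<Theta> M L r. g q > 0"
    and g_out: "\<forall>q\<in>space (deep_param_measure M L r) - deep_param_domain \<Theta> M L r. g q = 0"
  shows "\<exists>E\<in>sets P. emeasure P E > 0 \<and>
           E \<subseteq> {(th, w) \<in> deep_param_domain \<Theta> M L r.
                  \<exists>th' a ay. (\<forall>d<M. th' d \<in> \<Theta>) \<and>
                    grid_tensor M (2 ^ L) xs (shallow_score f M (2 ^ L) 1 th' a ay)
                    = grid_tensor M (2 ^ L) xs (deep_score f M L r th w)}"
proof -
  obtain E where E: "E \<in> sets (deep_param_measure M L r)" "0 < emeasure (deep_param_measure M L r) E"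
    and inactive: "E \<subseteq> {(th, w) \<in> deep_param_domain \<Theta> M L r. first_layer_inactive f M r xs th w}"
    using first_layer_inactive_positive_measure[OF fam distinct] by blast
  have "0 < emeasure P E"
    unfolding P_def using E g_meas g_pos inactive by (intro emeasure_density_pos) auto
  moreover have "E \<subseteq> {(th, w) \<in> deep_param_domain \<Theta> M L r.
                  \<exists>th' a ay. (\<forall>d<M. th' d \<in> \<Theta>) \<and>
                    grid_tensor M (2 ^ L) xs (shallow_score f M (2 ^ L) 1 th' a ay)
                    = grid_tensor M (2 ^ L) xs (deep_score f M L r th w)}"
  proof clarify
    fix th w assume "(th, w) \<in> E"
    then have "(th, w) \<in> deep_param_domain \<Theta> M L r" "first_layer_inactive f M r xs th w"
      using inactive by auto
    then show "(th, w) \<in> deep_param_domain \<Theta> M L r \<and> (\<exists>th' a ay. (\<forall>d<M. th' d \<in> \<Theta>) \<and>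
        grid_tensor M (2 ^ L) xs (shallow_score f M (2 ^ L) 1 th' a ay)
        = grid_tensor M (2 ^ L) xs (deep_score f M L r th w))"
      using grid_tensor_deep_score_eq_shallow_zero[OF L] unfolding deep_param_domain_def by blast
  qed
  ultimately show ?thesis
    using E(1) unfolding P_def by auto
qed

end
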